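(* Assume monotone treatment response, $Y(1)\ge Y(0)$ almost surely (equivalently $p_{10}=0$). Then, for every $a\in\mathcal A$ (assuming the conditioning events have positive probability and the denominators below are nonzero), $$\mathrm{TPR}_a=\frac{\mathbb E[\tau\mid A=a,Z=1]\,\mathbb P(Z=1\mid A=a)}{\mathbb E[\tau\mid A=a]},\qquad \mathrm{TNR}_a=\frac{\mathbb E[1-\tau\mid A=a,Z=0]\,\mathbb P(Z=0\mid A=a)}{\mathbb E[1-\tau\mid A=a]}.$$ In particular $\mathrm{TPR}_a,\mathrm{TNR}_a$ are identified from the distribution of $(X,A,T,Y)$.
   Context: Data consist of features $X\in\mathcal X$, a sensitive attribute $A$ in a finite set $\mathcal A$, binary treatment $T\in\{0,1\}$ and binary outcome $Y\in\{0,1\}$, with potential outcomes $Y(0),Y(1)\in\{0,1\}$, $Y=Y(T)$, and ignorability $(Y(0),Y(1))\perp T\mid X,A$ (with $\mathbb P(T=t\mid X,A)>0$ for $t=0,1$). Let $p_{ij}=p_{ij}(X,A)=\mathbb P(Y(0)=i,Y(1)=j\mid X,A)$. The conditional average treatment effect is $\tau=\tau(X,A)=\mathbb E[Y(1)-Y(0)\mid X,A]=p_{01}-p_{10}=\mathbb P(Y=1\mid T=1,X,A)-\mathbb P(Y=1\mid T=0,X,A)$. A policy is $Z=Z(X,A)\in\{0,1\}$. $\mathrm{TPR}_a=\mathbb P(Z=1\mid A=a,Y(1)>Y(0))$, $\mathrm{TNR}_a=\mathbb P(Z=0\mid A=a,Y(1)\le Y(0))$. *)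

theory Defs
  imports "HOL-Probability.Probability"
begin

definition cprob :: "'a measure \<Rightarrow> 'a set \<Rightarrow> 'a set \<Rightarrow> real" where
  "cprob M E B = measure M (E \<inter> B) / measure M B"

definition cexp_ev :: "'a measure \<Rightarrow> ('a \<Rightarrow> real) \<Rightarrow> 'a set \<Rightarrow> real" where
  "cexp_ev M f B = (\<integral>\<omega>. indicator B \<omega> * f \<omega> \<partial>M) / measure M B"

definition sigXA :: "'a measure \<Rightarrow> 'x measure \<Rightarrow> ('a \<Rightarrow> 'x) \<Rightarrow> ('a \<Rightarrow> 'c) \<Rightarrow> 'a measure" where
  "sigXA M MX X A = vimage_algebra (space M) (\<lambda>\<omega>. (X \<omega>, A \<omega>)) (MX \<Otimes>\<^sub>M count_space UNIV)"

definition cate :: "'a measure \<Rightarrow> 'x measure \<Rightarrow> ('a \<Rightarrow> 'x) \<Rightarrow> ('a \<Rightarrow> 'c)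
    \<Rightarrow> ('a \<Rightarrow> real) \<Rightarrow> ('a \<Rightarrow> real) \<Rightarrow> 'a \<Rightarrow> real" where
  "cate M MX X A Y0 Y1 = real_cond_exp M (sigXA M MX X A) (\<lambda>\<omega>. Y1 \<omega> - Y0 \<omega>)"

definition TPR :: "'a measure \<Rightarrow> ('a \<Rightarrow> 'x) \<Rightarrow> ('a \<Rightarrow> 'c) \<Rightarrow> ('x \<Rightarrow> 'c \<Rightarrow> bool)
    \<Rightarrow> ('a \<Rightarrow> real) \<Rightarrow> ('a \<Rightarrow> real) \<Rightarrow> 'c \<Rightarrow> real" where
  "TPR M X A Z Y0 Y1 a = cprob M {\<omega>\<in>space M. Z (X \<omega>) (A \<omega>)}
      {\<omega>\<in>space M. A \<omega> = a \<and> Y1 \<omega> > Y0 \<omega>}"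

definition TNR :: "'a measure \<Rightarrow> ('a \<Rightarrow> 'x) \<Rightarrow> ('a \<Rightarrow> 'c) \<Rightarrow> ('x \<Rightarrow> 'c \<Rightarrow> bool)
    \<Rightarrow> ('a \<Rightarrow> real) \<Rightarrow> ('a \<Rightarrow> real) \<Rightarrow> 'c \<Rightarrow> real" where
  "TNR M X A Z Y0 Y1 a = cprob M {\<omega>\<in>space M. \<not> Z (X \<omega>) (A \<omega>)}
      {\<omega>\<in>space M. A \<omega> = a \<and> Y1 \<omega> \<le> Y0 \<omega>}"

end

theory Submission
  imports Defs
begin

text \<open>Under monotone response with binary outcomes, \<open>Y(1) - Y(0)\<close> is almost surely the
  indicator of the responder event \<open>D = {Y(1) > Y(0)}\<close>. Since \<open>\<tau>\<close> is the conditional expectation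
  of \<open>Y(1) - Y(0)\<close> given \<open>(X, A)\<close>, integrating \<open>\<tau>\<close> (resp. \<open>1 - \<tau>\<close>) over any \<open>(X, A)\<close>-measurable
  event \<open>S\<close> gives \<open>P(S \<inter> D)\<close> (resp. \<open>P(S - D)\<close>). The events \<open>{A = a}\<close> and \<open>{A = a, Z = z}\<close>
  are \<open>(X, A)\<close>-measurable, so \<open>TPR\<^sub>a\<close> and \<open>TNR\<^sub>a\<close>, which are ratios of such probabilities,
  are ratios of integrals of \<open>\<tau>\<close> and \<open>1 - \<tau>\<close>.\<close>

lemma subalgebra_vimage_algebra:
  assumes "g \<in> M \<rightarrow>\<^sub>M N"
  shows "subalgebra M (vimage_algebra (space M) g N)"
  using assms by (simp add: subalgebra_def measurable_iff_sets)

lemma finite_measure_subalgebra_sigXA: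
  assumes "prob_space M" and "X \<in> M \<rightarrow>\<^sub>M MX" and "A \<in> M \<rightarrow>\<^sub>M count_space UNIV"
  shows "finite_measure_subalgebra M (sigXA M MX X A)"
  unfolding finite_measure_subalgebra_def finite_measure_subalgebra_axioms_def sigXA_def
  using assms by (auto intro: subalgebra_vimage_algebra prob_space.finite_measure)

lemma sets_sigXA_pred:
  assumes "X \<in> M \<rightarrow>\<^sub>M MX" and "A \<in> M \<rightarrow>\<^sub>M count_space UNIV"
    and "Q \<in> MX \<Otimes>\<^sub>M count_space UNIV \<rightarrow>\<^sub>M count_space UNIV"
  shows "{\<omega>\<in>space M. Q (X \<omega>, A \<omega>)} \<in> sets (sigXA M MX X A)"
proof -
  let ?g = "\<lambda>\<omega>. (X \<omega>, A \<omega>)" and ?N = "MX \<Otimes>\<^sub>M count_space UNIV"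
  have g: "?g \<in> M \<rightarrow>\<^sub>M ?N"
    using assms(1,2) by measurable
  have "{p\<in>space ?N. Q p} \<in> sets ?N"
    using assms(3) by (rule predE)
  then have "?g -` {p\<in>space ?N. Q p} \<inter> space M \<in> sets (sigXA M MX X A)"
    unfolding sigXA_def by (rule in_vimage_algebra)
  moreover have "?g -` {p\<in>space ?N. Q p} \<inter> space M = {\<omega>\<in>space M. Q (X \<omega>, A \<omega>)}"
    using measurable_space[OF g] by blast
  ultimately show ?thesis
    by simp
qed

lemma AE_diff_eq_indicator_monotone:
  fixes Y0 Y1 :: "'a \<Rightarrow> real"
  assumes "\<forall>\<omega>\<in>space M. Y0 \<omega> \<in> {0, 1} \<and> Y1 \<omega> \<in> {0, 1}"
    and "AE \<omega> in M. Y1 \<omega> \<ge> Y0 \<omega>"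
  shows "AE \<omega> in M. Y1 \<omega> - Y0 \<omega> = indicator {\<omega>\<in>space M. Y0 \<omega> < Y1 \<omega>} \<omega>"
  using AE_space assms(2) by eventually_elim (use assms(1) in \<open>auto split: split_indicator\<close>)

context sigma_finite_subalgebra
begin

lemma integral_indicator_real_cond_exp_AE_indicator:
  assumes "integrable M f" and "AE \<omega> in M. f \<omega> = indicator D \<omega>"
    and "D \<in> sets M" and "S \<in> sets F"
  shows "(\<integral>\<omega>. indicator S \<omega> * real_cond_exp M F f \<omega> \<partial>M) = measure M (S \<inter> D)"
proof -
  have [measurable]: "S \<in> sets M" "D \<in> sets M" "f \<in> borel_measurable M"
    using subalg assms by (auto simp: subalgebra_def)
  have "(\<integral>\<omega>. indicator S \<omega> * real_cond_exp M F f \<omega> \<partial>M) = (\<integral>\<omega>. indicator S \<omega> * f \<omega> \<partial>M)"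
    using real_cond_exp_intA[OF assms(1,4)] by (simp add: set_lebesgue_integral_def)
  also have "\<dots> = (\<integral>\<omega>. indicator (S \<inter> D) \<omega> \<partial>M)"
    using assms(2) by (intro integral_cong_AE) (auto split: split_indicator)
  finally show ?thesis
    using assms(3) by (simp add: Int_assoc)
qed

end

context finite_measure_subalgebra
begin

lemma integral_indicator_one_minus_real_cond_exp_AE_indicator:
  assumes "integrable M f" and "AE \<omega> in M. f \<omega> = indicator D \<omega>"
    and "D \<in> sets M" and "S \<in> sets F"
  shows "(\<integral>\<omega>. indicator S \<omega> * (1 - real_cond_exp M F f \<omega>) \<partial>M) = measure M (S - D)"
proof -
  have S: "S \<in> sets M"
    using subalg assms(4) by (auto simp: subalgebra_def)
  have "(\<integral>\<omega>. indicator S \<omega> * (1 - real_cond_exp M F f \<omega>) \<partial>M)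
      = (\<integral>\<omega>. indicator S \<omega> - indicator S \<omega> * real_cond_exp M F f \<omega> \<partial>M)"
    by (simp add: right_diff_distrib)
  also have "\<dots> = (\<integral>\<omega>. indicator S \<omega> \<partial>M) - (\<integral>\<omega>. indicator S \<omega> * real_cond_exp M F f \<omega> \<partial>M)"
    using S integrable_mult_indicator[OF S real_cond_exp_int(1)[OF assms(1)]]
    by (intro Bochner_Integration.integral_diff) (auto simp: less_top[symmetric])
  also have "\<dots> = measure M S - measure M (S \<inter> D)"
    using integral_indicator_real_cond_exp_AE_indicator[OF assms] S by simp
  also have "\<dots> = measure M (S - D)"
    using S assms(3) by (simp add: finite_measure_Diff')
  finally show ?thesis .
qed

end

lemma cprob_eq_cexp_ev_ratio:
  assumes "measure M S \<noteq> 0" and "measure M (S \<inter> E) \<noteq> 0"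
    and "(\<integral>\<omega>. indicator S \<omega> * g \<omega> \<partial>M) = measure M T"
    and "(\<integral>\<omega>. indicator (S \<inter> E) \<omega> * g \<omega> \<partial>M) = measure M (E \<inter> T)"
  shows "cprob M E T = cexp_ev M g (S \<inter> E) * cprob M E S / cexp_ev M g S"
  using assms by (simp add: cprob_def cexp_ev_def Int_commute)

theorem proposition2:
  fixes M :: "'a measure" and MX :: "'x measure"
    and X :: "'a \<Rightarrow> 'x" and A :: "'a \<Rightarrow> 'c::finite"
    and Y0 Y1 :: "'a \<Rightarrow> real" and Z :: "'x \<Rightarrow> 'c \<Rightarrow> bool" and a :: 'c
  defines "\<tau> \<equiv> cate M MX X A Y0 Y1"
    and "EA \<equiv> {\<omega>\<in>space M. A \<omega> = a}"
    and "EZ1 \<equiv> {\<omega>\<in>space M. Z (X \<omega>) (A \<omega>)}"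
    and "EZ0 \<equiv> {\<omega>\<in>space M. \<not> Z (X \<omega>) (A \<omega>)}"
  assumes "prob_space M"
    and "X \<in> M \<rightarrow>\<^sub>M MX"
    and "A \<in> M \<rightarrow>\<^sub>M count_space UNIV"
    and "Y0 \<in> borel_measurable M" and "Y1 \<in> borel_measurable M"
    and "\<forall>\<omega>\<in>space M. Y0 \<omega> \<in> {0, 1} \<and> Y1 \<omega> \<in> {0, 1}"
    and "(\<lambda>(x, c). Z x c) \<in> MX \<Otimes>\<^sub>M count_space UNIV \<rightarrow>\<^sub>M count_space UNIV"
    \<comment> \<open>monotone treatment response\<close>
    and "AE \<omega> in M. Y1 \<omega> \<ge> Y0 \<omega>"
    \<comment> \<open>conditioning events have positive probability, denominators nonzero\<close>
    and "measure M EA > 0"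
    and "measure M (EA \<inter> EZ1) > 0" and "measure M (EA \<inter> EZ0) > 0"
    and "measure M {\<omega>\<in>space M. A \<omega> = a \<and> Y1 \<omega> > Y0 \<omega>} > 0"
    and "measure M {\<omega>\<in>space M. A \<omega> = a \<and> Y1 \<omega> \<le> Y0 \<omega>} > 0"
    and "cexp_ev M \<tau> EA \<noteq> 0"
    and "cexp_ev M (\<lambda>\<omega>. 1 - \<tau> \<omega>) EA \<noteq> 0"
  shows "TPR M X A Z Y0 Y1 a =
           cexp_ev M \<tau> (EA \<inter> EZ1) * cprob M EZ1 EA / cexp_ev M \<tau> EA \<and>
         TNR M X A Z Y0 Y1 a =
           cexp_ev M (\<lambda>\<omega>. 1 - \<tau> \<omega>) (EA \<inter> EZ0) * cprob M EZ0 EA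
             / cexp_ev M (\<lambda>\<omega>. 1 - \<tau> \<omega>) EA"
proof -
  note [measurable] = assms(6-9,11)
  define F where "F = sigXA M MX X A"
  define D where "D = {\<omega>\<in>space M. Y0 \<omega> < Y1 \<omega>}"
  interpret finite_measure_subalgebra M F
    unfolding F_def using assms(5-7) by (rule finite_measure_subalgebra_sigXA)
  have "(\<lambda>p. snd p = a) \<in> MX \<Otimes>\<^sub>M count_space UNIV \<rightarrow>\<^sub>M count_space UNIV"
    by measurable
  from sets_sigXA_pred[OF assms(6,7) this] have "EA \<in> sets F"
    unfolding F_def EA_def by simp
  have "(\<lambda>p. \<not> (case p of (x, c) \<Rightarrow> Z x c)) \<in> MX \<Otimes>\<^sub>M count_space UNIV \<rightarrow>\<^sub>M count_space UNIV"
    by measurable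
  from sets_sigXA_pred[OF assms(6,7) this] sets_sigXA_pred[OF assms(6,7,11)]
  have "EZ1 \<in> sets F" "EZ0 \<in> sets F"
    unfolding F_def EZ1_def EZ0_def by simp_all
  with \<open>EA \<in> sets F\<close> have events: "EA \<in> sets F" "EA \<inter> EZ1 \<in> sets F" "EA \<inter> EZ0 \<in> sets F"
    by auto
  have diff: "AE \<omega> in M. Y1 \<omega> - Y0 \<omega> = indicator D \<omega>"
    unfolding D_def using assms(10,12) by (rule AE_diff_eq_indicator_monotone)
  have "integrable M (\<lambda>\<omega>. Y1 \<omega> - Y0 \<omega>)"
    using assms(10) by (intro integrable_const_bound[where B=1] AE_I2) auto
  note integrals = integral_indicator_real_cond_exp_AE_indicator[OF this diff]
    integral_indicator_one_minus_real_cond_exp_AE_indicator[OF this diff]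
  have "D \<in> sets M"
    unfolding D_def by measurable
  have \<tau>: "\<tau> = real_cond_exp M F (\<lambda>\<omega>. Y1 \<omega> - Y0 \<omega>)"
    unfolding \<tau>_def cate_def F_def ..
  have "TPR M X A Z Y0 Y1 a = cprob M EZ1 (EA \<inter> D)"
    unfolding TPR_def EZ1_def EA_def D_def by (rule arg_cong[where f = "cprob M _"]) auto
  also have "\<dots> = cexp_ev M \<tau> (EA \<inter> EZ1) * cprob M EZ1 EA / cexp_ev M \<tau> EA"
    using assms(13,14) events \<open>D \<in> sets M\<close>
    by (intro cprob_eq_cexp_ev_ratio) (auto simp: \<tau> integrals Int_ac)
  finally have tpr:
    "TPR M X A Z Y0 Y1 a = cexp_ev M \<tau> (EA \<inter> EZ1) * cprob M EZ1 EA / cexp_ev M \<tau> EA" .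
  have "TNR M X A Z Y0 Y1 a = cprob M EZ0 (EA - D)"
    unfolding TNR_def EZ0_def EA_def D_def by (rule arg_cong[where f = "cprob M _"]) auto
  also have "\<dots> = cexp_ev M (\<lambda>\<omega>. 1 - \<tau> \<omega>) (EA \<inter> EZ0) * cprob M EZ0 EA
      / cexp_ev M (\<lambda>\<omega>. 1 - \<tau> \<omega>) EA"
    using assms(13,15) events \<open>D \<in> sets M\<close>
    by (intro cprob_eq_cexp_ev_ratio) (auto simp: \<tau> integrals Int_Diff[symmetric] Int_commute)
  finally show ?thesis
    using tpr by blast
qed

end
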